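(* Let $a<b$ and $c<d$ be real numbers, and let $f,g:[a,b]\times[c,d]\to\mathbb{R}$ be continuous functions whose first partial derivatives $D_1 f, D_2 f, D_1 g, D_2 g$ and mixed second partial derivatives $D_2D_1 f$, $D_2 D_1 g$ exist and are continuous on $[a,b]\times[c,d]$. For $h\in\{f,g\}$ and $(x,y)\in[a,b]\times[c,d]$ define \[ P(h(x,y))=\frac12\big[h(x,c)+h(x,d)+h(a,y)+h(b,y)\big]-\frac14\big[h(a,c)+h(a,d)+h(b,c)+h(b,d)\big]. \] Then \[ \left|\int_a^b\int_c^d\Big[f(x,y)g(x,y)-\frac12\big(P(f(x,y))\,g(x,y)+P(g(x,y))\,f(x,y)\big)\Big]\,dy\,dx\right| \le \frac18(b-a)(d-c)\int_a^b\int_c^d\Big[|g(x,y)|\,\|D_2D_1 f\|_\infty+|f(x,y)|\,\|D_2D_1 g\|_\infty\Big]\,dy\,dx . \]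
   Context: $D_1$ and $D_2$ denote partial differentiation with respect to the first and second variable respectively, so $D_2D_1 f=\frac{\partial}{\partial y}\frac{\partial f}{\partial x}$. For a function $h$ on $[a,b]\times[c,d]$, $\|h\|_\infty=\sup_{(x,y)\in[a,b]\times[c,d]}|h(x,y)|$. *)

theory Defs
  imports "HOL-Analysis.Analysis"
begin

definition P_op :: "real \<Rightarrow> real \<Rightarrow> real \<Rightarrow> real \<Rightarrow> (real \<Rightarrow> real \<Rightarrow> real) \<Rightarrow> real \<Rightarrow> real \<Rightarrow> real" where
  "P_op a b c d h x y =
     (1/2) * (h x c + h x d + h a y + h b y)
     - (1/4) * (h a c + h a d + h b c + h b d)"

definition sup_norm_rect :: "real \<Rightarrow> real \<Rightarrow> real \<Rightarrow> real \<Rightarrow> (real \<Rightarrow> real \<Rightarrow> real) \<Rightarrow> real" where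
  "sup_norm_rect a b c d h = (SUP p \<in> {a..b} \<times> {c..d}. \<bar>h (fst p) (snd p)\<bar>)"

end

theory Submission
  imports Defs
begin

text \<open>Writing \<open>\<Delta> h (x,y) (\<alpha>,\<beta>) = h x y - h \<alpha> y - h x \<beta> + h \<alpha> \<beta>\<close>, the remainder \<open>h - P h\<close>
  is the average of the four mixed differences taken against the corners of the rectangle.
  Two applications of the mean value theorem bound each of them by
  \<open>\<parallel>D\<^sub>2D\<^sub>1h\<parallel>\<^sub>\<infinity> \<bar>x - \<alpha>\<bar> \<bar>y - \<beta>\<bar>\<close>, and the four products sum to \<open>(b - a)(d - c)\<close>.
  Since \<open>f g - (P f \<cdot> g + P g \<cdot> f)/2 = ((f - P f) g + (g - P g) f)/2\<close>, the estimate follows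
  by integrating the pointwise bound.\<close>

lemma mixed_difference_bound:
  fixes h h1 h12 :: "real \<Rightarrow> real \<Rightarrow> real"
  assumes h1: "\<And>x y. x \<in> {a..b} \<Longrightarrow> y \<in> {c..d} \<Longrightarrow>
               ((\<lambda>t. h t y) has_real_derivative h1 x y) (at x within {a..b})"
    and h12: "\<And>x y. x \<in> {a..b} \<Longrightarrow> y \<in> {c..d} \<Longrightarrow>
               ((\<lambda>t. h1 x t) has_real_derivative h12 x y) (at y within {c..d})"
    and M: "\<And>x y. x \<in> {a..b} \<Longrightarrow> y \<in> {c..d} \<Longrightarrow> \<bar>h12 x y\<bar> \<le> M"
    and x: "x \<in> {a..b}" and \<alpha>: "\<alpha> \<in> {a..b}" and y: "y \<in> {c..d}" and \<beta>: "\<beta> \<in> {c..d}"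
  shows "\<bar>h x y - h \<alpha> y - h x \<beta> + h \<alpha> \<beta>\<bar> \<le> M * \<bar>x - \<alpha>\<bar> * \<bar>y - \<beta>\<bar>"
proof -
  have h1_diff: "\<bar>h1 t y - h1 t \<beta>\<bar> \<le> M * \<bar>y - \<beta>\<bar>" if "t \<in> {a..b}" for t
    using field_differentiable_bound[of "{c..d}" "h1 t" "h12 t" M y \<beta>] h12 M that y \<beta>
    by auto
  have diff_deriv: "((\<lambda>t. h t y - h t \<beta>) has_real_derivative h1 t y - h1 t \<beta>) (at t within {a..b})"
    if "t \<in> {a..b}" for t
    using that y \<beta> by (intro derivative_intros h1)
  have "norm ((h x y - h x \<beta>) - (h \<alpha> y - h \<alpha> \<beta>)) \<le> (M * \<bar>y - \<beta>\<bar>) * norm (x - \<alpha>)"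
    using h1_diff by (intro field_differentiable_bound[OF convex_real_interval(5) diff_deriv _ x \<alpha>]) auto
  then show ?thesis
    by (simp add: algebra_simps)
qed

lemma P_op_remainder_eq:
  "h x y - P_op a b c d h x y =
     (1/4) * ((h x y - h a y - h x c + h a c) + (h x y - h a y - h x d + h a d)
            + (h x y - h b y - h x c + h b c) + (h x y - h b y - h x d + h b d))"
  by (simp add: P_op_def algebra_simps)

lemma P_op_remainder_bound:
  fixes h h1 h12 :: "real \<Rightarrow> real \<Rightarrow> real"
  assumes h1: "\<And>x y. x \<in> {a..b} \<Longrightarrow> y \<in> {c..d} \<Longrightarrow>
               ((\<lambda>t. h t y) has_real_derivative h1 x y) (at x within {a..b})"
    and h12: "\<And>x y. x \<in> {a..b} \<Longrightarrow> y \<in> {c..d} \<Longrightarrow>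
               ((\<lambda>t. h1 x t) has_real_derivative h12 x y) (at y within {c..d})"
    and M: "\<And>x y. x \<in> {a..b} \<Longrightarrow> y \<in> {c..d} \<Longrightarrow> \<bar>h12 x y\<bar> \<le> M"
    and x: "x \<in> {a..b}" and y: "y \<in> {c..d}"
  shows "\<bar>h x y - P_op a b c d h x y\<bar> \<le> (1/4) * M * (b - a) * (d - c)"
proof -
  have corner: "\<bar>h x y - h \<alpha> y - h x \<beta> + h \<alpha> \<beta>\<bar> \<le> M * \<bar>x - \<alpha>\<bar> * \<bar>y - \<beta>\<bar>"
    if "\<alpha> \<in> {a, b}" "\<beta> \<in> {c, d}" for \<alpha> \<beta>
    using that x y by (intro mixed_difference_bound[OF h1 h12 M]) auto
  have "\<bar>h x y - P_op a b c d h x y\<bar> \<le> (1/4) * (M * (x - a) * (y - c) + M * (x - a) * (d - y)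
      + M * (b - x) * (y - c) + M * (b - x) * (d - y))"
    using corner[of a c] corner[of a d] corner[of b c] corner[of b d] x y
    unfolding P_op_remainder_eq by (simp add: abs_minus_commute)
  also have "\<dots> = (1/4) * M * (b - a) * (d - c)"
    by (simp add: algebra_simps)
  finally show ?thesis .
qed

lemma abs_le_sup_norm_rect:
  assumes "continuous_on ({a..b} \<times> {c..d}) (\<lambda>p. h (fst p) (snd p))"
    and "x \<in> {a..b}" "y \<in> {c..d}"
  shows "\<bar>h x y\<bar> \<le> sup_norm_rect a b c d h"
proof -
  have "compact ((\<lambda>p. \<bar>h (fst p) (snd p)\<bar>) ` ({a..b} \<times> {c..d}))"
    using assms(1) by (intro compact_continuous_image compact_Times continuous_intros) auto
  then have "bdd_above ((\<lambda>p. \<bar>h (fst p) (snd p)\<bar>) ` ({a..b} \<times> {c..d}))"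
    by (intro bounded_imp_bdd_above compact_imp_bounded)
  then show ?thesis
    unfolding sup_norm_rect_def
    using cSUP_upper[of "(x, y)" "{a..b} \<times> {c..d}" "\<lambda>p. \<bar>h (fst p) (snd p)\<bar>"] assms(2,3)
    by auto
qed

lemma continuous_on_curried_compose:
  assumes h: "continuous_on (S \<times> T) (\<lambda>p. h (fst p) (snd p))"
    and "continuous_on U \<alpha>" "continuous_on U \<beta>" "\<alpha> ` U \<subseteq> S" "\<beta> ` U \<subseteq> T"
  shows "continuous_on U (\<lambda>u. h (\<alpha> u) (\<beta> u))"
  using continuous_on_compose2[OF h, of U "\<lambda>u. (\<alpha> u, \<beta> u)"] assms(2-)
  by (auto intro: continuous_intros)

lemma continuous_on_P_op:
  assumes "a \<le> b" "c \<le> d" and h: "continuous_on ({a..b} \<times> {c..d}) (\<lambda>p. h (fst p) (snd p))"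
  shows "continuous_on ({a..b} \<times> {c..d}) (\<lambda>p. P_op a b c d h (fst p) (snd p))"
proof -
  have "continuous_on ({a..b} \<times> {c..d}) (\<lambda>p. h (fst p) e)" if "e \<in> {c..d}" for e
    by (rule continuous_on_curried_compose[OF h]) (use that in \<open>auto intro: continuous_intros\<close>)
  moreover have "continuous_on ({a..b} \<times> {c..d}) (\<lambda>p. h e (snd p))" if "e \<in> {a..b}" for e
    by (rule continuous_on_curried_compose[OF h]) (use that in \<open>auto intro: continuous_intros\<close>)
  ultimately show ?thesis
    unfolding P_op_def using assms by (auto intro!: continuous_intros)
qed

lemma
  fixes F :: "real \<Rightarrow> real \<Rightarrow> real"
  assumes "continuous_on ({a..b} \<times> {c..d}) (\<lambda>p. F (fst p) (snd p))"
  shows integrable_iterated_integral: "(\<lambda>x. integral {c..d} (F x)) integrable_on {a..b}"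
    and integrable_on_slice: "x \<in> {a..b} \<Longrightarrow> F x integrable_on {c..d}"
proof -
  have "continuous_on ({a..b} \<times> cbox c d) (\<lambda>(x, t). F x t)"
    using assms by (simp add: case_prod_beta box_real)
  from integral_continuous_on_param[OF this]
  show "(\<lambda>x. integral {c..d} (F x)) integrable_on {a..b}"
    by (intro integrable_continuous_real) simp
  assume "x \<in> {a..b}"
  then have "continuous_on {c..d} (\<lambda>t. F x t)"
    by (intro continuous_on_curried_compose[OF assms] continuous_on_const continuous_on_id) auto
  then show "F x integrable_on {c..d}"
    by (rule integrable_continuous_real)
qed

lemma abs_iterated_integral_le:
  fixes F B :: "real \<Rightarrow> real \<Rightarrow> real"
  assumes F: "continuous_on ({a..b} \<times> {c..d}) (\<lambda>p. F (fst p) (snd p))"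
    and B: "continuous_on ({a..b} \<times> {c..d}) (\<lambda>p. B (fst p) (snd p))"
    and le: "\<And>x y. x \<in> {a..b} \<Longrightarrow> y \<in> {c..d} \<Longrightarrow> \<bar>F x y\<bar> \<le> B x y"
  shows "\<bar>integral {a..b} (\<lambda>x. integral {c..d} (F x))\<bar> \<le> integral {a..b} (\<lambda>x. integral {c..d} (B x))"
  using integral_norm_bound_integral[OF integrable_iterated_integral[OF F] integrable_iterated_integral[OF B]]
    integral_norm_bound_integral[OF integrable_on_slice[OF F] integrable_on_slice[OF B]] le
  by auto

lemma abs_symmetrised_product_remainder_le:
  fixes u v p q U V :: real
  assumes "\<bar>u - p\<bar> \<le> U" "\<bar>v - q\<bar> \<le> V"
  shows "\<bar>u * v - (1/2) * (p * v + q * u)\<bar> \<le> (1/2) * (U * \<bar>v\<bar> + V * \<bar>u\<bar>)"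
proof -
  have "u * v - (1/2) * (p * v + q * u) = (1/2) * ((u - p) * v + (v - q) * u)"
    by (simp add: algebra_simps)
  also have "\<bar>\<dots>\<bar> \<le> (1/2) * (\<bar>u - p\<bar> * \<bar>v\<bar> + \<bar>v - q\<bar> * \<bar>u\<bar>)"
    using abs_triangle_ineq[of "(u - p) * v" "(v - q) * u"] by (simp add: abs_mult)
  also have "\<dots> \<le> (1/2) * (U * \<bar>v\<bar> + V * \<bar>u\<bar>)"
    using assms by (intro mult_left_mono add_mono mult_right_mono) simp_all
  finally show ?thesis .
qed

theorem corollary2p1:
  fixes a b c d :: real
    and f g f1 f2 f12 g1 g2 g12 :: "real \<Rightarrow> real \<Rightarrow> real"
  assumes "a < b" and "c < d"
    and f_cont: "continuous_on ({a..b} \<times> {c..d}) (\<lambda>p. f (fst p) (snd p))"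
    and g_cont: "continuous_on ({a..b} \<times> {c..d}) (\<lambda>p. g (fst p) (snd p))"
    and f1: "\<And>x y. x \<in> {a..b} \<Longrightarrow> y \<in> {c..d} \<Longrightarrow>
               ((\<lambda>t. f t y) has_real_derivative f1 x y) (at x within {a..b})"
    and f2: "\<And>x y. x \<in> {a..b} \<Longrightarrow> y \<in> {c..d} \<Longrightarrow>
               ((\<lambda>t. f x t) has_real_derivative f2 x y) (at y within {c..d})"
    and f12: "\<And>x y. x \<in> {a..b} \<Longrightarrow> y \<in> {c..d} \<Longrightarrow>
               ((\<lambda>t. f1 x t) has_real_derivative f12 x y) (at y within {c..d})"
    and g1: "\<And>x y. x \<in> {a..b} \<Longrightarrow> y \<in> {c..d} \<Longrightarrow>
               ((\<lambda>t. g t y) has_real_derivative g1 x y) (at x within {a..b})"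
    and g2: "\<And>x y. x \<in> {a..b} \<Longrightarrow> y \<in> {c..d} \<Longrightarrow>
               ((\<lambda>t. g x t) has_real_derivative g2 x y) (at y within {c..d})"
    and g12: "\<And>x y. x \<in> {a..b} \<Longrightarrow> y \<in> {c..d} \<Longrightarrow>
               ((\<lambda>t. g1 x t) has_real_derivative g12 x y) (at y within {c..d})"
    and f1_cont: "continuous_on ({a..b} \<times> {c..d}) (\<lambda>p. f1 (fst p) (snd p))"
    and f2_cont: "continuous_on ({a..b} \<times> {c..d}) (\<lambda>p. f2 (fst p) (snd p))"
    and f12_cont: "continuous_on ({a..b} \<times> {c..d}) (\<lambda>p. f12 (fst p) (snd p))"
    and g1_cont: "continuous_on ({a..b} \<times> {c..d}) (\<lambda>p. g1 (fst p) (snd p))"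
    and g2_cont: "continuous_on ({a..b} \<times> {c..d}) (\<lambda>p. g2 (fst p) (snd p))"
    and g12_cont: "continuous_on ({a..b} \<times> {c..d}) (\<lambda>p. g12 (fst p) (snd p))"
  shows "\<bar>integral {a..b} (\<lambda>x. integral {c..d} (\<lambda>y.
            f x y * g x y
            - (1/2) * (P_op a b c d f x y * g x y + P_op a b c d g x y * f x y)))\<bar>
         \<le> (1/8) * (b - a) * (d - c) *
           integral {a..b} (\<lambda>x. integral {c..d} (\<lambda>y.
             \<bar>g x y\<bar> * sup_norm_rect a b c d f12 + \<bar>f x y\<bar> * sup_norm_rect a b c d g12))"
proof -
  let ?Pf = "P_op a b c d f" and ?Pg = "P_op a b c d g"
  let ?Mf = "sup_norm_rect a b c d f12" and ?Mg = "sup_norm_rect a b c d g12"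
  have pointwise: "\<bar>f x y * g x y - (1/2) * (?Pf x y * g x y + ?Pg x y * f x y)\<bar>
      \<le> (1/8) * (b - a) * (d - c) * (\<bar>g x y\<bar> * ?Mf + \<bar>f x y\<bar> * ?Mg)"
    if "x \<in> {a..b}" "y \<in> {c..d}" for x y
  proof -
    have "\<bar>f x y - ?Pf x y\<bar> \<le> (1/4) * ?Mf * (b - a) * (d - c)"
      by (rule P_op_remainder_bound[OF f1 f12 abs_le_sup_norm_rect[OF f12_cont] that])
    moreover have "\<bar>g x y - ?Pg x y\<bar> \<le> (1/4) * ?Mg * (b - a) * (d - c)"
      by (rule P_op_remainder_bound[OF g1 g12 abs_le_sup_norm_rect[OF g12_cont] that])
    ultimately have "\<bar>f x y * g x y - (1/2) * (?Pf x y * g x y + ?Pg x y * f x y)\<bar>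
      \<le> (1/2) * ((1/4) * ?Mf * (b - a) * (d - c) * \<bar>g x y\<bar> + (1/4) * ?Mg * (b - a) * (d - c) * \<bar>f x y\<bar>)"
      by (rule abs_symmetrised_product_remainder_le)
    also have "\<dots> = (1/8) * (b - a) * (d - c) * (\<bar>g x y\<bar> * ?Mf + \<bar>f x y\<bar> * ?Mg)"
      by (simp add: field_simps)
    finally show ?thesis .
  qed
  have Pf_cont: "continuous_on ({a..b} \<times> {c..d}) (\<lambda>p. ?Pf (fst p) (snd p))"
    using \<open>a < b\<close> \<open>c < d\<close> by (intro continuous_on_P_op f_cont) auto
  have Pg_cont: "continuous_on ({a..b} \<times> {c..d}) (\<lambda>p. ?Pg (fst p) (snd p))"
    using \<open>a < b\<close> \<open>c < d\<close> by (intro continuous_on_P_op g_cont) auto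
  have "\<bar>integral {a..b} (\<lambda>x. integral {c..d} (\<lambda>y.
            f x y * g x y - (1/2) * (?Pf x y * g x y + ?Pg x y * f x y)))\<bar>
      \<le> integral {a..b} (\<lambda>x. integral {c..d} (\<lambda>y.
            (1/8) * (b - a) * (d - c) * (\<bar>g x y\<bar> * ?Mf + \<bar>f x y\<bar> * ?Mg)))"
    using f_cont g_cont Pf_cont Pg_cont
    by (intro abs_iterated_integral_le pointwise continuous_intros)
  then show ?thesis
    by simp
qed

end
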